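(* Let $n\ge2$, let $\alpha_1,\dots,\alpha_n>0$, and let $A$ be the symmetric $n\times n$ real matrix with $A_{ii}=1$, $A_{i,i+1}=A_{i+1,i}=-\alpha_i$ for $1\le i\le n-1$, $A_{1,n}=A_{n,1}=-\alpha_n$, and all other entries $0$. Let $\lambda_{\min}$ be the smallest eigenvalue of $A$ and $M=\max\{\alpha_i+\alpha_{i+1}: i=1,\dots,n\}$ (indices modulo $n$). Then: (i) $\lambda_{\min}\ge1-M$; in particular $A$ is positive definite if $M<1$; (ii) $\lambda_{\min}=1-M$ if and only if $\alpha_i=\alpha_{i+2}$ for all $i$ (modulo $n$); (iii) if $n\ge4$, $\alpha_1=\dots=\alpha_{n-1}=\alpha$ and $\alpha_n=\beta$, then $\lambda_{\min}\ge\lambda$ for every real $\lambda$ with $\lambda\le1-2\alpha$, $\lambda<1-\beta$ and $\alpha^2\le(1-\alpha-\lambda)(1-\beta-\lambda)$; in particular $A$ is positive definite if $\alpha<\tfrac12$, $\beta<1$ and $\alpha^2<(1-\alpha)(1-\beta)$. *)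

theory Defs
  imports "Jordan_Normal_Form.Char_Poly"
begin

text \<open>Cyclic tridiagonal matrix, 0-based indices: alpha i (i < n) is the paper's alpha_(i+1).
  For n = 2 both off-diagonal contributions add up.\<close>
definition cyc_mat :: "nat \<Rightarrow> (nat \<Rightarrow> real) \<Rightarrow> real mat" where
  "cyc_mat n alpha = mat n n (\<lambda>(i, j).
      (if i = j then 1 else 0)
      - (if j = Suc i mod n then alpha i else 0)
      - (if i = Suc j mod n then alpha j else 0))"

definition lambda_min :: "real mat \<Rightarrow> real" where
  "lambda_min A = Min {k. eigenvalue A k}"

definition pos_def_mat :: "real mat \<Rightarrow> bool" where
  "pos_def_mat A \<longleftrightarrow> A \<in> carrier_mat (dim_row A) (dim_row A) \<and>
     (\<forall>v \<in> carrier_vec (dim_row A). v \<noteq> 0\<^sub>v (dim_row A) \<longrightarrow> v \<bullet> (A *\<^sub>v v) > 0)"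

end

theory Submission
  imports Defs
begin

text \<open>Write the quadratic form as \<open>|v|\<^sup>2 - 2 \<Sum> \<alpha>\<^sub>i v\<^sub>i v\<^sub>i\<^sub>+\<^sub>1\<close> and bound each
  cross term by the weighted AM-GM inequality
  \<open>2 \<alpha>\<^sub>i v\<^sub>i v\<^sub>i\<^sub>+\<^sub>1 \<le> \<alpha>\<^sub>i t\<^sub>i v\<^sub>i\<^sup>2 + (\<alpha>\<^sub>i / t\<^sub>i) v\<^sub>i\<^sub>+\<^sub>1\<^sup>2\<close> with weights \<open>t\<^sub>i > 0\<close>.
  Then the form is at least \<open>\<lambda> |v|\<^sup>2\<close> as soon as every row satisfies
  \<open>\<alpha>\<^sub>i t\<^sub>i + \<alpha>\<^sub>i\<^sub>-\<^sub>1 / t\<^sub>i\<^sub>-\<^sub>1 \<le> 1 - \<lambda>\<close>, and since the matrix is real symmetric its eigenvalues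
  are real and hence all at least \<open>\<lambda>\<close>. Unit weights give (i). For (iii) the two edges next to
  the \<open>\<beta>\<close>-edge get the weights \<open>\<alpha>/c\<close> and \<open>c/\<alpha>\<close>, where \<open>c = 1 - \<alpha> - \<lambda>\<close>, which balances
  the rows at both ends of the \<open>\<beta>\<close>-edge. For (ii), the identity
  \<open>v \<bullet> A v = |v|\<^sup>2 - \<Sum> (\<alpha>\<^sub>i + \<alpha>\<^sub>i\<^sub>-\<^sub>1) v\<^sub>i\<^sup>2 + \<Sum> \<alpha>\<^sub>i (v\<^sub>i - v\<^sub>i\<^sub>+\<^sub>1)\<^sup>2\<close> shows that an
  eigenvector for \<open>1 - M\<close> is constant, which forces every \<open>\<alpha>\<^sub>i + \<alpha>\<^sub>i\<^sub>+\<^sub>1\<close> to equal \<open>M\<close>;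
  conversely, the all-ones vector is then such an eigenvector.\<close>

definition cyc_pred :: "nat \<Rightarrow> nat \<Rightarrow> nat" where
  "cyc_pred n i = (if i = 0 then n - 1 else i - 1)"

lemma Suc_mod_less: "i < n \<Longrightarrow> Suc i mod n < n"
  by auto

lemma cyc_pred_less: "i < n \<Longrightarrow> cyc_pred n i < n"
  by (auto simp: cyc_pred_def)

lemma cyc_pred_Suc_mod: "i < n \<Longrightarrow> cyc_pred n (Suc i mod n) = i"
  by (auto simp: cyc_pred_def mod_Suc)

lemma Suc_mod_cyc_pred: "i < n \<Longrightarrow> Suc (cyc_pred n i) mod n = i"
  by (auto simp: cyc_pred_def mod_Suc)

lemma sum_cyclic_shift: "(\<Sum>i<n. g i (Suc i mod n)) = (\<Sum>i<n. g (cyc_pred n i) i)"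
  by (rule sum.reindex_bij_witness[of _ "cyc_pred n" "\<lambda>i. Suc i mod n"])
     (auto simp: cyc_pred_less cyc_pred_Suc_mod Suc_mod_cyc_pred)

lemma period_two_iff_neighbour_sums_const:
  fixes alpha :: "nat \<Rightarrow> 'a :: cancel_comm_monoid_add"
  shows "(\<forall>i<n. alpha i = alpha ((i + 2) mod n)) \<longleftrightarrow>
         (\<exists>s. \<forall>i<n. alpha i + alpha (Suc i mod n) = s)"
proof
  assume period: "\<forall>i<n. alpha i = alpha ((i + 2) mod n)"
  have "alpha i + alpha (Suc i mod n) = alpha 0 + alpha (Suc 0 mod n)" if "i < n" for i
    using that
  proof (induction i)
    case (Suc i)
    then have "i < n" by simp
    with period have "alpha (Suc (Suc i) mod n) = alpha i"
      by (metis add_2_eq_Suc')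
    with Suc \<open>i < n\<close> show ?case by (simp add: add.commute)
  qed simp
  then show "\<exists>s. \<forall>i<n. alpha i + alpha (Suc i mod n) = s" by blast
next
  assume "\<exists>s. \<forall>i<n. alpha i + alpha (Suc i mod n) = s"
  then obtain s where s: "\<And>i. i < n \<Longrightarrow> alpha i + alpha (Suc i mod n) = s" by blast
  show "\<forall>i<n. alpha i = alpha ((i + 2) mod n)"
  proof (intro allI impI)
    fix i assume i: "i < n"
    have "Suc (Suc i mod n) mod n = (i + 2) mod n" by (simp add: mod_Suc_eq)
    with s[OF i] s[OF Suc_mod_less[OF i]]
    have "alpha (Suc i mod n) + alpha i = alpha (Suc i mod n) + alpha ((i + 2) mod n)"
      by (simp add: add.commute)
    then show "alpha i = alpha ((i + 2) mod n)" by simp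
  qed
qed

lemma scalar_prod_self_eq_sum_squares:
  fixes v :: "'a :: comm_semiring_1 vec"
  shows "v \<in> carrier_vec n \<Longrightarrow> v \<bullet> v = (\<Sum>i<n. (v $ i)\<^sup>2)"
  by (simp add: scalar_prod_def lessThan_atLeast0 power2_eq_square)

lemma eigenvalue_ge_of_quadratic_form_ge:
  fixes A :: "real mat"
  assumes A: "A \<in> carrier_mat n n"
    and bound: "\<And>v. v \<in> carrier_vec n \<Longrightarrow> l * (v \<bullet> v) \<le> v \<bullet> (A *\<^sub>v v)"
    and k: "eigenvalue A k"
  shows "l \<le> k"
proof -
  obtain v where v: "v \<in> carrier_vec n" "v \<noteq> 0\<^sub>v n" "A *\<^sub>v v = k \<cdot>\<^sub>v v"
    using k A unfolding eigenvalue_def eigenvector_def by auto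
  have "l * (v \<bullet> v) \<le> k * (v \<bullet> v)"
    using bound[OF v(1)] v(1) by (simp add: v(3))
  moreover have "0 < v \<bullet> v"
    using conjugate_square_greater_0_vec[OF v(1)] v(2) by simp
  ultimately show ?thesis by (metis mult_le_cancel_right_pos)
qed

lemma pos_def_mat_of_quadratic_form_ge:
  fixes A :: "real mat"
  assumes A: "A \<in> carrier_mat n n" and l: "0 < l"
    and bound: "\<And>v. v \<in> carrier_vec n \<Longrightarrow> l * (v \<bullet> v) \<le> v \<bullet> (A *\<^sub>v v)"
  shows "pos_def_mat A"
  unfolding pos_def_mat_def
proof (intro conjI ballI impI)
  show "A \<in> carrier_mat (dim_row A) (dim_row A)" using A by simp
next
  fix v :: "real vec"
  assume "v \<in> carrier_vec (dim_row A)" "v \<noteq> 0\<^sub>v (dim_row A)"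
  with A have v: "v \<in> carrier_vec n" "v \<noteq> 0\<^sub>v n" by auto
  then have "0 < l * (v \<bullet> v)"
    using l conjugate_square_greater_0_vec[OF v(1)] by simp
  also have "\<dots> \<le> v \<bullet> (A *\<^sub>v v)" by (rule bound[OF v(1)])
  finally show "0 < v \<bullet> (A *\<^sub>v v)" .
qed

lemma finite_eigenvalues:
  fixes A :: "'a :: field mat"
  assumes A: "A \<in> carrier_mat n n"
  shows "finite {k. eigenvalue A k}"
proof -
  have "char_poly A \<noteq> 0" using degree_monic_char_poly[OF A] by auto
  then have "finite {k. poly (char_poly A) k = 0}" by (rule poly_roots_finite)
  then show ?thesis by (simp add: eigenvalue_root_char_poly[OF A])
qed

lemma eigenvalue_of_real_symmetric_is_real:
  fixes A :: "real mat"
  assumes A: "A \<in> carrier_mat n n" and sym: "transpose_mat A = A"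
    and z: "eigenvalue (map_mat complex_of_real A) z"
  shows "z \<in> \<real>"
proof -
  let ?B = "map_mat complex_of_real A"
  obtain w where w: "w \<in> carrier_vec n" "w \<noteq> 0\<^sub>v n" "?B *\<^sub>v w = z \<cdot>\<^sub>v w"
    using z A unfolding eigenvalue_def eigenvector_def by auto
  have sym_entries: "A $$ (i, j) = A $$ (j, i)" if "i < n" "j < n" for i j
  proof -
    have "A $$ (i, j) = transpose_mat A $$ (i, j)" by (simp add: sym)
    also have "\<dots> = A $$ (j, i)" using that A by simp
    finally show ?thesis .
  qed
  have Bw: "(\<Sum>j<n. complex_of_real (A $$ (i, j)) * w $ j) = z * w $ i" if "i < n" for i
  proof -
    have "(?B *\<^sub>v w) $ i = (\<Sum>j<n. complex_of_real (A $$ (i, j)) * w $ j)"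
      using A w(1) that by (auto simp: scalar_prod_def lessThan_atLeast0 intro!: sum.cong)
    then show ?thesis using w(3) that w(1) by simp
  qed
  define S where "S = (\<Sum>i<n. \<Sum>j<n. cnj (w $ i) * complex_of_real (A $$ (i, j)) * w $ j)"
  define r where "r = (\<Sum>i<n. (cmod (w $ i))\<^sup>2)"
  have S_eq: "S = z * complex_of_real r"
  proof -
    have "S = (\<Sum>i<n. cnj (w $ i) * (\<Sum>j<n. complex_of_real (A $$ (i, j)) * w $ j))"
      unfolding S_def by (simp add: sum_distrib_left mult.assoc)
    also have "\<dots> = (\<Sum>i<n. cnj (w $ i) * (z * w $ i))" using Bw by simp
    also have "\<dots> = z * (\<Sum>i<n. cnj (w $ i) * w $ i)"
      by (simp add: sum_distrib_left mult.left_commute)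
    also have "(\<Sum>i<n. cnj (w $ i) * w $ i) = complex_of_real r"
      unfolding r_def of_real_sum by (intro sum.cong refl) (metis complex_norm_square mult.commute)
    finally show ?thesis .
  qed
  have "cnj S = S"
  proof -
    have "cnj S = (\<Sum>i<n. \<Sum>j<n. w $ i * complex_of_real (A $$ (i, j)) * cnj (w $ j))"
      unfolding S_def by (simp add: cnj_sum)
    also have "\<dots> = (\<Sum>j<n. \<Sum>i<n. w $ i * complex_of_real (A $$ (i, j)) * cnj (w $ j))"
      by (rule sum.swap)
    also have "\<dots> = S" unfolding S_def
      by (intro sum.cong refl) (simp add: sym_entries mult.commute mult.left_commute)
    finally show ?thesis .
  qed
  have "0 < r"
  proof -
    obtain i where "i < n" "w $ i \<noteq> 0"
      using w(1,2) by (metis dim_vec eq_vecI index_zero_vec(1,2) carrier_vecD)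
    then show ?thesis unfolding r_def by (intro sum_pos2[of _ i]) auto
  qed
  have "cnj z * complex_of_real r = z * complex_of_real r"
    using S_eq \<open>cnj S = S\<close> by (metis complex_cnj_complex_of_real complex_cnj_mult)
  with \<open>0 < r\<close> show ?thesis by (simp add: Reals_cnj_iff)
qed

lemma real_symmetric_mat_has_eigenvalue:
  fixes A :: "real mat"
  assumes A: "A \<in> carrier_mat n n" and sym: "transpose_mat A = A" and n: "0 < n"
  shows "\<exists>k. eigenvalue A k"
proof -
  let ?B = "map_mat complex_of_real A"
  have B: "?B \<in> carrier_mat n n" using A by simp
  have "degree (char_poly ?B) = n" using degree_monic_char_poly[OF B] by simp
  then have "\<not> constant (poly (char_poly ?B))" using n by (simp add: constant_degree)
  then obtain z where z: "poly (char_poly ?B) z = 0"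
    using fundamental_theorem_of_algebra by blast
  then have "z \<in> \<real>"
    using eigenvalue_of_real_symmetric_is_real[OF A sym] eigenvalue_root_char_poly[OF B] by blast
  then obtain k where k: "z = complex_of_real k" by (auto elim: Reals_cases)
  have "complex_of_real (poly (char_poly A) k) = poly (char_poly ?B) z"
    unfolding k of_real_hom.char_poly_hom[OF A] by (simp add: of_real_hom.poly_map_poly)
  with z have "poly (char_poly A) k = 0" by simp
  then show ?thesis using eigenvalue_root_char_poly[OF A] by blast
qed

lemma lambda_min_le:
  fixes A :: "real mat"
  assumes "A \<in> carrier_mat n n" and "eigenvalue A k"
  shows "lambda_min A \<le> k"
  unfolding lambda_min_def using finite_eigenvalues[OF assms(1)] assms(2) by (auto intro: Min_le)

lemma eigenvalue_lambda_min:
  fixes A :: "real mat"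
  assumes A: "A \<in> carrier_mat n n" and sym: "transpose_mat A = A" and n: "0 < n"
  shows "eigenvalue A (lambda_min A)"
proof -
  have "{k. eigenvalue A k} \<noteq> {}" using real_symmetric_mat_has_eigenvalue[OF A sym n] by auto
  then show ?thesis unfolding lambda_min_def using Min_in[OF finite_eigenvalues[OF A]] by auto
qed

lemma lambda_min_ge_of_quadratic_form_ge:
  fixes A :: "real mat"
  assumes A: "A \<in> carrier_mat n n" and sym: "transpose_mat A = A" and n: "0 < n"
    and bound: "\<And>v. v \<in> carrier_vec n \<Longrightarrow> l * (v \<bullet> v) \<le> v \<bullet> (A *\<^sub>v v)"
  shows "l \<le> lambda_min A"
  using eigenvalue_ge_of_quadratic_form_ge[OF A bound eigenvalue_lambda_min[OF A sym n]] .

lemma cyc_mat_carrier [simp]: "cyc_mat n alpha \<in> carrier_mat n n"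
  by (simp add: cyc_mat_def)

lemma dim_row_cyc_mat [simp]: "dim_row (cyc_mat n alpha) = n"
  by (simp add: cyc_mat_def)

lemma transpose_cyc_mat [simp]: "transpose_mat (cyc_mat n alpha) = cyc_mat n alpha"
  by (rule eq_matI) (auto simp: cyc_mat_def)

lemma cyc_mat_mult_vec_index:
  assumes v: "v \<in> carrier_vec n" and i: "i < n"
  shows "(cyc_mat n alpha *\<^sub>v v) $ i =
    v $ i - alpha i * v $ (Suc i mod n) - alpha (cyc_pred n i) * v $ (cyc_pred n i)"
proof -
  have "(cyc_mat n alpha *\<^sub>v v) $ i = (\<Sum>j<n. ((if i = j then 1 else 0)
      - (if j = Suc i mod n then alpha i else 0)
      - (if i = Suc j mod n then alpha j else 0)) * v $ j)"
    using v i by (auto simp: cyc_mat_def scalar_prod_def lessThan_atLeast0 intro!: sum.cong)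
  also have "\<dots> = (\<Sum>j<n. (if j = i then v $ j else 0)
      - (if j = Suc i mod n then alpha i * v $ j else 0)
      - (if j = cyc_pred n i then alpha (cyc_pred n i) * v $ j else 0))"
  proof (intro sum.cong refl)
    fix j assume "j \<in> {..<n}"
    then have "i = Suc j mod n \<longleftrightarrow> j = cyc_pred n i"
      using i by (metis lessThan_iff cyc_pred_Suc_mod Suc_mod_cyc_pred)
    then show "((if i = j then 1 else 0) - (if j = Suc i mod n then alpha i else 0)
      - (if i = Suc j mod n then alpha j else 0)) * v $ j = (if j = i then v $ j else 0)
      - (if j = Suc i mod n then alpha i * v $ j else 0)
      - (if j = cyc_pred n i then alpha (cyc_pred n i) * v $ j else 0)"
      by (auto simp: left_diff_distrib)
  qed
  also have "\<dots> = v $ i - alpha i * v $ (Suc i mod n) - alpha (cyc_pred n i) * v $ (cyc_pred n i)"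
    using i by (simp add: sum_subtractf sum.delta sum.delta' Suc_mod_less cyc_pred_less)
  finally show ?thesis .
qed

lemma cyc_mat_mult_const_vec:
  "cyc_mat n alpha *\<^sub>v vec n (\<lambda>_. c) = vec n (\<lambda>i. (1 - alpha i - alpha (cyc_pred n i)) * c)"
proof (rule eq_vecI)
  fix i assume "i < dim_vec (vec n (\<lambda>i. (1 - alpha i - alpha (cyc_pred n i)) * c))"
  then have "i < n" by simp
  then show "(cyc_mat n alpha *\<^sub>v vec n (\<lambda>_. c)) $ i = vec n (\<lambda>i. (1 - alpha i - alpha (cyc_pred n i)) * c) $ i"
    by (simp add: cyc_mat_mult_vec_index Suc_mod_less cyc_pred_less algebra_simps
        del: index_mult_mat_vec)
qed simp

lemma cyc_mat_quadratic_form: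
  assumes v: "v \<in> carrier_vec n"
  shows "v \<bullet> (cyc_mat n alpha *\<^sub>v v) = v \<bullet> v - 2 * (\<Sum>i<n. alpha i * v $ i * v $ (Suc i mod n))"
proof -
  have "v \<bullet> (cyc_mat n alpha *\<^sub>v v) = (\<Sum>i<n. v $ i * (cyc_mat n alpha *\<^sub>v v) $ i)"
    using v by (simp add: scalar_prod_def lessThan_atLeast0)
  also have "\<dots> = (\<Sum>i<n. (v $ i)\<^sup>2 - alpha i * v $ i * v $ (Suc i mod n)
                     - alpha (cyc_pred n i) * v $ (cyc_pred n i) * v $ i)"
    by (intro sum.cong refl)
       (simp add: cyc_mat_mult_vec_index[OF v] algebra_simps power2_eq_square del: index_mult_mat_vec)
  also have "\<dots> = v \<bullet> v - 2 * (\<Sum>i<n. alpha i * v $ i * v $ (Suc i mod n))"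
    using sum_cyclic_shift[of "\<lambda>i j. alpha i * v $ i * v $ j" n]
    unfolding sum_subtractf scalar_prod_self_eq_sum_squares[OF v] by linarith
  finally show ?thesis .
qed

lemma cyc_mat_quadratic_form_eq:
  assumes v: "v \<in> carrier_vec n"
  shows "v \<bullet> (cyc_mat n alpha *\<^sub>v v) = v \<bullet> v
    - (\<Sum>i<n. (alpha i + alpha (cyc_pred n i)) * (v $ i)\<^sup>2)
    + (\<Sum>i<n. alpha i * (v $ i - v $ (Suc i mod n))\<^sup>2)"
proof -
  have "(\<Sum>i<n. alpha i * (v $ i - v $ (Suc i mod n))\<^sup>2)
      = (\<Sum>i<n. (alpha i * (v $ i)\<^sup>2 + alpha i * (v $ (Suc i mod n))\<^sup>2)
                - 2 * (alpha i * v $ i * v $ (Suc i mod n)))"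
    by (intro sum.cong refl) (simp add: power2_eq_square algebra_simps)
  also have "\<dots> = (\<Sum>i<n. alpha i * (v $ i)\<^sup>2 + alpha i * (v $ (Suc i mod n))\<^sup>2)
                - 2 * (\<Sum>i<n. alpha i * v $ i * v $ (Suc i mod n))"
    by (simp add: sum_subtractf sum_distrib_left)
  also have "(\<Sum>i<n. alpha i * (v $ i)\<^sup>2 + alpha i * (v $ (Suc i mod n))\<^sup>2)
      = (\<Sum>i<n. (alpha i + alpha (cyc_pred n i)) * (v $ i)\<^sup>2)"
    using sum_cyclic_shift[of "\<lambda>i j. alpha i * (v $ j)\<^sup>2" n]
    by (simp add: sum.distrib distrib_right)
  finally have cross: "(\<Sum>i<n. alpha i * (v $ i - v $ (Suc i mod n))\<^sup>2)
      = (\<Sum>i<n. (alpha i + alpha (cyc_pred n i)) * (v $ i)\<^sup>2)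
        - 2 * (\<Sum>i<n. alpha i * v $ i * v $ (Suc i mod n))" .
  show ?thesis unfolding cyc_mat_quadratic_form[OF v] cross by (simp add: algebra_simps)
qed

lemma cyc_mat_quadratic_form_ge_weighted:
  assumes v: "v \<in> carrier_vec n"
    and alpha_nonneg: "\<And>i. i < n \<Longrightarrow> 0 \<le> alpha i"
    and t_pos: "\<And>i. i < n \<Longrightarrow> 0 < t i"
    and row_bound: "\<And>i. i < n \<Longrightarrow> alpha i * t i + alpha (cyc_pred n i) / t (cyc_pred n i) \<le> 1 - l"
  shows "l * (v \<bullet> v) \<le> v \<bullet> (cyc_mat n alpha *\<^sub>v v)"
proof -
  have amgm: "2 * (alpha i * x * y) \<le> alpha i * t i * x\<^sup>2 + alpha i / t i * y\<^sup>2"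
    if "i < n" for i x y
  proof -
    have "0 \<le> alpha i * (t i * x - y)\<^sup>2 / t i"
      using alpha_nonneg[OF that] t_pos[OF that] by simp
    also have "\<dots> = alpha i * t i * x\<^sup>2 + alpha i / t i * y\<^sup>2 - 2 * (alpha i * x * y)"
      using t_pos[OF that] by (simp add: power2_eq_square field_simps)
    finally show ?thesis by simp
  qed
  have "2 * (\<Sum>i<n. alpha i * v $ i * v $ (Suc i mod n))
      \<le> (\<Sum>i<n. alpha i * t i * (v $ i)\<^sup>2 + alpha i / t i * (v $ (Suc i mod n))\<^sup>2)"
    unfolding sum_distrib_left by (rule sum_mono, rule amgm) simp
  also have "\<dots> = (\<Sum>i<n. (alpha i * t i + alpha (cyc_pred n i) / t (cyc_pred n i)) * (v $ i)\<^sup>2)"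
    using sum_cyclic_shift[of "\<lambda>i j. alpha i / t i * (v $ j)\<^sup>2" n]
    by (simp add: sum.distrib distrib_right)
  also have "\<dots> \<le> (\<Sum>i<n. (1 - l) * (v $ i)\<^sup>2)"
    by (intro sum_mono mult_right_mono) (simp_all add: row_bound)
  also have "\<dots> = (1 - l) * (v \<bullet> v)"
    by (simp add: scalar_prod_self_eq_sum_squares[OF v] sum_distrib_left)
  finally have "2 * (\<Sum>i<n. alpha i * v $ i * v $ (Suc i mod n)) \<le> (1 - l) * (v \<bullet> v)" .
  then show ?thesis unfolding cyc_mat_quadratic_form[OF v] by (simp add: algebra_simps)
qed

lemma cyc_mat_quadratic_form_ge:
  assumes v: "v \<in> carrier_vec n"
    and alpha_nonneg: "\<And>i. i < n \<Longrightarrow> 0 \<le> alpha i"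
    and M_ge: "\<And>i. i < n \<Longrightarrow> alpha i + alpha (Suc i mod n) \<le> M"
  shows "(1 - M) * (v \<bullet> v) \<le> v \<bullet> (cyc_mat n alpha *\<^sub>v v)"
proof (rule cyc_mat_quadratic_form_ge_weighted[where alpha = alpha, OF v alpha_nonneg])
  show "0 < (1::real)" if "i < n" for i by simp
  show "alpha i * 1 + alpha (cyc_pred n i) / 1 \<le> 1 - (1 - M)" if "i < n" for i
    using M_ge[OF cyc_pred_less[OF that]] by (simp add: Suc_mod_cyc_pred[OF that] add.commute)
qed

lemma cyc_mat_quadratic_form_eq_bound_imp_const:
  assumes v: "v \<in> carrier_vec n"
    and alpha_pos: "\<And>i. i < n \<Longrightarrow> 0 < alpha i"
    and M_ge: "\<And>i. i < n \<Longrightarrow> alpha i + alpha (Suc i mod n) \<le> M"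
    and eq: "v \<bullet> (cyc_mat n alpha *\<^sub>v v) = (1 - M) * (v \<bullet> v)"
    and i: "i < n"
  shows "v $ i = v $ 0"
proof -
  let ?D = "\<lambda>i. alpha i * (v $ i - v $ (Suc i mod n))\<^sup>2"
  have D_nonneg: "0 \<le> ?D i" if "i \<in> {..<n}" for i
    using alpha_pos that by (simp add: less_imp_le)
  have M_pred: "alpha i + alpha (cyc_pred n i) \<le> M" if "i < n" for i
    using M_ge[OF cyc_pred_less[OF that]] by (simp add: Suc_mod_cyc_pred[OF that] add.commute)
  have "(\<Sum>i<n. (alpha i + alpha (cyc_pred n i)) * (v $ i)\<^sup>2) \<le> (\<Sum>i<n. M * (v $ i)\<^sup>2)"
    by (intro sum_mono mult_right_mono) (simp_all add: M_pred)
  also have "\<dots> = M * (v \<bullet> v)"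
    by (simp add: scalar_prod_self_eq_sum_squares[OF v] sum_distrib_left)
  finally have "(1 - M) * (v \<bullet> v) + sum ?D {..<n} \<le> v \<bullet> (cyc_mat n alpha *\<^sub>v v)"
    unfolding cyc_mat_quadratic_form_eq[OF v] by (simp add: algebra_simps)
  moreover have "0 \<le> sum ?D {..<n}" using D_nonneg by (rule sum_nonneg)
  ultimately have "sum ?D {..<n} = 0" using eq by linarith
  then have "\<forall>j\<in>{..<n}. ?D j = 0"
    using sum_nonneg_eq_0_iff[of "{..<n}" ?D] D_nonneg by simp
  then have D_zero: "?D j = 0" if "j < n" for j
    using that by blast
  have step: "v $ (Suc j mod n) = v $ j" if "j < n" for j
  proof -
    have "alpha j \<noteq> 0" using alpha_pos[OF that] by simp
    with D_zero[OF that] show ?thesis by simp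
  qed
  show ?thesis
    using i
  proof (induction i)
    case (Suc i)
    then have "i < n" by simp
    have "v $ Suc i = v $ (Suc i mod n)" using Suc.prems by simp
    also have "\<dots> = v $ i" using step[OF \<open>i < n\<close>] .
    also have "\<dots> = v $ 0" using Suc.IH[OF \<open>i < n\<close>] .
    finally show ?case .
  qed simp
qed

lemma lambda_min_cyc_mat_ge:
  assumes n: "0 < n"
    and alpha_nonneg: "\<And>i. i < n \<Longrightarrow> 0 \<le> alpha i"
    and M_ge: "\<And>i. i < n \<Longrightarrow> alpha i + alpha (Suc i mod n) \<le> M"
  shows "1 - M \<le> lambda_min (cyc_mat n alpha)"
proof (rule lambda_min_ge_of_quadratic_form_ge[OF cyc_mat_carrier transpose_cyc_mat n])
  show "(1 - M) * (v \<bullet> v) \<le> v \<bullet> (cyc_mat n alpha *\<^sub>v v)" if "v \<in> carrier_vec n" for v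
    using that alpha_nonneg M_ge by (rule cyc_mat_quadratic_form_ge[where alpha = alpha])
qed

lemma pos_def_cyc_mat:
  assumes alpha_nonneg: "\<And>i. i < n \<Longrightarrow> 0 \<le> alpha i"
    and M_ge: "\<And>i. i < n \<Longrightarrow> alpha i + alpha (Suc i mod n) \<le> M"
    and M: "M < 1"
  shows "pos_def_mat (cyc_mat n alpha)"
proof (rule pos_def_mat_of_quadratic_form_ge[OF cyc_mat_carrier])
  show "0 < 1 - M" using M by simp
  show "(1 - M) * (v \<bullet> v) \<le> v \<bullet> (cyc_mat n alpha *\<^sub>v v)" if "v \<in> carrier_vec n" for v
    using that alpha_nonneg M_ge by (rule cyc_mat_quadratic_form_ge[where alpha = alpha])
qed

lemma cyc_mat_neighbour_sums_of_eigenvalue: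
  assumes alpha_pos: "\<And>i. i < n \<Longrightarrow> 0 < alpha i"
    and M_ge: "\<And>i. i < n \<Longrightarrow> alpha i + alpha (Suc i mod n) \<le> M"
    and eig: "eigenvalue (cyc_mat n alpha) (1 - M)"
    and i: "i < n"
  shows "alpha i + alpha (Suc i mod n) = M"
proof -
  obtain v where v: "v \<in> carrier_vec n" "v \<noteq> 0\<^sub>v n"
      and eigen: "cyc_mat n alpha *\<^sub>v v = (1 - M) \<cdot>\<^sub>v v"
    using eig unfolding eigenvalue_def eigenvector_def by auto
  have "v \<bullet> (cyc_mat n alpha *\<^sub>v v) = (1 - M) * (v \<bullet> v)"
    using v(1) by (simp add: eigen)
  then have const: "v $ j = v $ 0" if "j < n" for j
    using cyc_mat_quadratic_form_eq_bound_imp_const[where alpha = alpha and M = M,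
        OF v(1) alpha_pos M_ge _ that]
    by blast
  define c where "c = v $ 0"
  have v_eq: "v = vec n (\<lambda>_. c)"
  proof (rule eq_vecI)
    fix j assume "j < dim_vec (vec n (\<lambda>_. c))"
    then show "v $ j = vec n (\<lambda>_. c) $ j" using const[of j] by (simp add: c_def)
  qed (use v(1) in simp)
  have "c \<noteq> 0"
  proof
    assume "c = 0"
    with v_eq have "v = 0\<^sub>v n" by (simp add: zero_vec_def)
    with v(2) show False by simp
  qed
  have const_eigen: "vec n (\<lambda>j. (1 - alpha j - alpha (cyc_pred n j)) * c) = (1 - M) \<cdot>\<^sub>v vec n (\<lambda>_. c)"
    using eigen unfolding v_eq cyc_mat_mult_const_vec .
  have "(1 - alpha (Suc i mod n) - alpha i) * c = (1 - M) * c"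
    using arg_cong[OF const_eigen, of "\<lambda>u. u $ (Suc i mod n)"] i
    by (simp add: Suc_mod_less cyc_pred_Suc_mod)
  with \<open>c \<noteq> 0\<close> show ?thesis by simp
qed

lemma eigenvalue_cyc_mat_of_neighbour_sums:
  assumes n: "0 < n" and sums: "\<And>i. i < n \<Longrightarrow> alpha i + alpha (Suc i mod n) = s"
  shows "eigenvalue (cyc_mat n alpha) (1 - s)"
proof -
  have pred: "alpha (cyc_pred n i) = s - alpha i" if "i < n" for i
    using sums[OF cyc_pred_less[OF that]] by (simp add: Suc_mod_cyc_pred[OF that] eq_diff_eq)
  have "cyc_mat n alpha *\<^sub>v vec n (\<lambda>_. 1) = (1 - s) \<cdot>\<^sub>v vec n (\<lambda>_. 1)"
    unfolding cyc_mat_mult_const_vec by (rule eq_vecI) (simp_all add: pred)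
  moreover have "vec n (\<lambda>_. 1) \<noteq> (0\<^sub>v n :: real vec)"
    using n by (metis index_vec index_zero_vec(1) zero_neq_one)
  ultimately show ?thesis
    unfolding eigenvalue_def eigenvector_def by (intro exI[of _ "vec n (\<lambda>_. 1)"]) auto
qed

lemma lambda_min_cyc_mat_eq_iff:
  assumes n: "0 < n"
    and alpha_pos: "\<And>i. i < n \<Longrightarrow> 0 < alpha i"
    and M_ge: "\<And>i. i < n \<Longrightarrow> alpha i + alpha (Suc i mod n) \<le> M"
    and M_attained: "\<exists>i<n. alpha i + alpha (Suc i mod n) = M"
  shows "lambda_min (cyc_mat n alpha) = 1 - M \<longleftrightarrow> (\<forall>i<n. alpha i = alpha ((i + 2) mod n))"
proof
  assume "lambda_min (cyc_mat n alpha) = 1 - M"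
  then have "eigenvalue (cyc_mat n alpha) (1 - M)"
    using eigenvalue_lambda_min[OF cyc_mat_carrier[of n alpha] transpose_cyc_mat n] by simp
  then have "alpha i + alpha (Suc i mod n) = M" if "i < n" for i
    using cyc_mat_neighbour_sums_of_eigenvalue[where alpha = alpha, OF alpha_pos M_ge _ that]
    by blast
  then show "\<forall>i<n. alpha i = alpha ((i + 2) mod n)"
    unfolding period_two_iff_neighbour_sums_const by blast
next
  assume "\<forall>i<n. alpha i = alpha ((i + 2) mod n)"
  then obtain s where s: "\<And>i. i < n \<Longrightarrow> alpha i + alpha (Suc i mod n) = s"
    unfolding period_two_iff_neighbour_sums_const by blast
  with M_attained have "s = M" by auto
  have "eigenvalue (cyc_mat n alpha) (1 - s)"
    using n s by (rule eigenvalue_cyc_mat_of_neighbour_sums[where alpha = alpha])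
  then have "lambda_min (cyc_mat n alpha) \<le> 1 - M"
    unfolding \<open>s = M\<close> by (rule lambda_min_le[OF cyc_mat_carrier])
  moreover have "1 - M \<le> lambda_min (cyc_mat n alpha)"
    using n alpha_pos[THEN less_imp_le] M_ge by (rule lambda_min_cyc_mat_ge[where alpha = alpha])
  ultimately show "lambda_min (cyc_mat n alpha) = 1 - M" by simp
qed

(* Weights of the edges (0, 1) and (n - 2, n - 1), the neighbours of the edge (n - 1, 0) that
   carries b; all other edges get weight 1. *)
definition corner_weight :: "nat \<Rightarrow> real \<Rightarrow> real \<Rightarrow> nat \<Rightarrow> real" where
  "corner_weight n a c i = (if i = 0 then a / c else if i = n - 2 then c / a else 1)"

lemma almost_constant_row_sums:
  fixes alpha :: "nat \<Rightarrow> real"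
  assumes n: "4 \<le> n"
    and alpha_a: "\<And>i. i < n - 1 \<Longrightarrow> alpha i = a" and alpha_b: "alpha (n - 1) = b"
    and a: "a \<noteq> 0" and c: "c \<noteq> 0" and i: "i < n"
  shows "alpha i * corner_weight n a c i + alpha (cyc_pred n i) / corner_weight n a c (cyc_pred n i)
    \<in> {a\<^sup>2 / c + b, a + c, a + a}"
proof -
  have idx: "n - 1 \<noteq> 0" "n - 2 \<noteq> 0" "n - 3 \<noteq> 0" "n - 1 \<noteq> n - 2" "n - 3 \<noteq> n - 2"
    "(1::nat) \<noteq> n - 2"
    using n by auto
  have a_vals: "alpha 0 = a" "alpha 1 = a" "alpha (n - 2) = a" "alpha (n - 3) = a"
    using n by (auto intro!: alpha_a)
  consider "i = 0" | "i = 1" | "i = n - 2" | "i = n - 1" | "2 \<le> i" "i \<le> n - 3"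
    using i by arith
  then show ?thesis
  proof cases
    case 1
    then show ?thesis
      using idx a_vals alpha_b by (simp add: corner_weight_def cyc_pred_def power2_eq_square)
  next
    case 2
    then show ?thesis
      using idx a_vals a c by (simp add: corner_weight_def cyc_pred_def)
  next
    case 3
    then have "cyc_pred n i = n - 3" using idx by (simp add: cyc_pred_def)
    with 3 show ?thesis
      using idx a_vals a by (simp add: corner_weight_def add.commute)
  next
    case 4
    then have "cyc_pred n i = n - 2" using idx by (simp add: cyc_pred_def)
    with 4 show ?thesis
      using idx a_vals alpha_b a c by (simp add: corner_weight_def power2_eq_square add.commute)
  next
    case 5
    then have "i \<noteq> 0" "i \<noteq> n - 2" "i - 1 \<noteq> 0" "i - 1 \<noteq> n - 2" "i < n - 1" "i - 1 < n - 1"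
      by arith+
    then show ?thesis by (simp add: corner_weight_def cyc_pred_def alpha_a)
  qed
qed

lemma cyc_mat_quadratic_form_ge_almost_constant:
  assumes n: "4 \<le> n"
    and alpha_a: "\<And>i. i < n - 1 \<Longrightarrow> alpha i = a" and alpha_b: "alpha (n - 1) = b"
    and a: "0 < a" and b: "0 \<le> b"
    and l_le: "l \<le> 1 - 2 * a" and l_quad: "a\<^sup>2 \<le> (1 - a - l) * (1 - b - l)"
    and v: "v \<in> carrier_vec n"
  shows "l * (v \<bullet> v) \<le> v \<bullet> (cyc_mat n alpha *\<^sub>v v)"
proof -
  define c where "c = 1 - a - l"
  have c: "0 < c" using a l_le by (simp add: c_def)
  have "a\<^sup>2 \<le> (1 - b - l) * c"
    using l_quad by (simp add: c_def mult.commute)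
  then have "a\<^sup>2 / c \<le> 1 - b - l" by (simp add: pos_divide_le_eq[OF c])
  then have corner: "a\<^sup>2 / c + b \<le> 1 - l" by simp
  have a_ne: "a \<noteq> 0" and c_ne: "c \<noteq> 0" using a c by simp_all
  show ?thesis
  proof (rule cyc_mat_quadratic_form_ge_weighted[where t = "corner_weight n a c", OF v])
    show "0 \<le> alpha i" if "i < n" for i
    proof (cases "i = n - 1")
      case False
      with that have "i < n - 1" by arith
      with a show ?thesis by (simp add: alpha_a)
    qed (use alpha_b b in simp)
    show "0 < corner_weight n a c i" if "i < n" for i
      using a c by (simp add: corner_weight_def)
    show "alpha i * corner_weight n a c i + alpha (cyc_pred n i) / corner_weight n a c (cyc_pred n i)
        \<le> 1 - l" if "i < n" for i
      using almost_constant_row_sums[where alpha = alpha, OF n alpha_a alpha_b a_ne c_ne that]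
        corner l_le
      by (auto simp: c_def)
  qed
qed

lemma pos_margin_exists:
  fixes a b :: real
  assumes a: "a < 1/2" and b: "b < 1" and ab: "a\<^sup>2 < (1 - a) * (1 - b)"
  obtains l where "0 < l" "l \<le> 1 - 2 * a" "a\<^sup>2 \<le> (1 - a - l) * (1 - b - l)"
proof -
  define q where "q = ((1 - a) * (1 - b) - a\<^sup>2) / (2 - a - b)"
  define l where "l = min (1 - 2 * a) q"
  have d: "0 < 2 - a - b" using a b by simp
  have "0 < l" unfolding l_def q_def using a ab d by simp
  moreover have "l \<le> 1 - 2 * a" unfolding l_def by simp
  moreover have "a\<^sup>2 \<le> (1 - a - l) * (1 - b - l)"
  proof -
    have "l * (2 - a - b) \<le> q * (2 - a - b)" using d unfolding l_def by (simp add: mult_right_mono)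
    also have "\<dots> = (1 - a) * (1 - b) - a\<^sup>2" unfolding q_def using d by simp
    finally have "l * (2 - a - b) \<le> (1 - a) * (1 - b) - a\<^sup>2" .
    moreover have "0 \<le> l\<^sup>2" by simp
    moreover have "(1 - a - l) * (1 - b - l) = (1 - a) * (1 - b) - l * (2 - a - b) + l\<^sup>2"
      by (simp add: algebra_simps power2_eq_square)
    ultimately show ?thesis by linarith
  qed
  ultimately show ?thesis using that by blast
qed

lemma lambda_min_cyc_mat_ge_almost_constant:
  assumes n: "4 \<le> n"
    and "\<And>i. i < n - 1 \<Longrightarrow> alpha i = a" and "alpha (n - 1) = b" and "0 < a" and "0 \<le> b"
    and "l \<le> 1 - 2 * a" and "a\<^sup>2 \<le> (1 - a - l) * (1 - b - l)"
  shows "l \<le> lambda_min (cyc_mat n alpha)"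
proof (rule lambda_min_ge_of_quadratic_form_ge[OF cyc_mat_carrier transpose_cyc_mat])
  show "0 < n" using n by simp
  show "l * (v \<bullet> v) \<le> v \<bullet> (cyc_mat n alpha *\<^sub>v v)" if "v \<in> carrier_vec n" for v
    using assms that by (rule cyc_mat_quadratic_form_ge_almost_constant[where alpha = alpha])
qed

lemma pos_def_cyc_mat_almost_constant:
  assumes "4 \<le> n"
    and "\<And>i. i < n - 1 \<Longrightarrow> alpha i = a" and "alpha (n - 1) = b" and "0 < a" and "0 \<le> b"
    and "a < 1/2" and "b < 1" and "a\<^sup>2 < (1 - a) * (1 - b)"
  shows "pos_def_mat (cyc_mat n alpha)"
proof -
  obtain l where l: "0 < l" "l \<le> 1 - 2 * a" "a\<^sup>2 \<le> (1 - a - l) * (1 - b - l)"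
    using pos_margin_exists[OF assms(6-8)] by blast
  show ?thesis
  proof (rule pos_def_mat_of_quadratic_form_ge[OF cyc_mat_carrier])
    show "0 < l" by (rule l(1))
    show "l * (v \<bullet> v) \<le> v \<bullet> (cyc_mat n alpha *\<^sub>v v)" if "v \<in> carrier_vec n" for v
      using assms(1-5) l(2,3) that
      by (rule cyc_mat_quadratic_form_ge_almost_constant[where alpha = alpha])
  qed
qed

theorem mainTheorem18:
  fixes n :: nat and alpha :: "nat \<Rightarrow> real"
  assumes n2: "n \<ge> 2"
    and pos: "\<And>i. i < n \<Longrightarrow> alpha i > 0"
  defines "M \<equiv> Max {alpha i + alpha (Suc i mod n) | i. i < n}"
  shows "lambda_min (cyc_mat n alpha) \<ge> 1 - M
    \<and> (M < 1 \<longrightarrow> pos_def_mat (cyc_mat n alpha))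
    \<and> (lambda_min (cyc_mat n alpha) = 1 - M \<longleftrightarrow> (\<forall>i < n. alpha i = alpha ((i + 2) mod n)))
    \<and> (\<forall>a b. n \<ge> 4 \<and> (\<forall>i < n - 1. alpha i = a) \<and> alpha (n - 1) = b \<longrightarrow>
          (\<forall>l::real. l \<le> 1 - 2 * a \<and> l < 1 - b \<and> a\<^sup>2 \<le> (1 - a - l) * (1 - b - l)
               \<longrightarrow> lambda_min (cyc_mat n alpha) \<ge> l)
        \<and> (a < 1/2 \<and> b < 1 \<and> a\<^sup>2 < (1 - a) * (1 - b) \<longrightarrow> pos_def_mat (cyc_mat n alpha)))"
proof -
  have n: "0 < n" using n2 by simp
  have alpha_nonneg: "\<And>i. i < n \<Longrightarrow> 0 \<le> alpha i" using pos less_imp_le by blast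
  have M_fin: "finite {alpha i + alpha (Suc i mod n) | i. i < n}" by simp
  have M_ge: "alpha i + alpha (Suc i mod n) \<le> M" if "i < n" for i
    unfolding M_def using that by (intro Max_ge[OF M_fin]) auto
  have "M \<in> {alpha i + alpha (Suc i mod n) | i. i < n}"
    unfolding M_def using n by (intro Max_in[OF M_fin]) auto
  then have M_attained: "\<exists>i<n. alpha i + alpha (Suc i mod n) = M" by auto
  have almost_constant: "(\<forall>l::real. l \<le> 1 - 2 * a \<and> l < 1 - b \<and> a\<^sup>2 \<le> (1 - a - l) * (1 - b - l)
               \<longrightarrow> lambda_min (cyc_mat n alpha) \<ge> l)
        \<and> (a < 1/2 \<and> b < 1 \<and> a\<^sup>2 < (1 - a) * (1 - b) \<longrightarrow> pos_def_mat (cyc_mat n alpha))"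
    if "n \<ge> 4 \<and> (\<forall>i < n - 1. alpha i = a) \<and> alpha (n - 1) = b" for a b
  proof -
    from that have n4: "4 \<le> n" and alpha_a: "\<And>i. i < n - 1 \<Longrightarrow> alpha i = a"
      and alpha_b: "alpha (n - 1) = b" by auto
    have a: "0 < a" using alpha_a[of 0] pos[of 0] n4 by simp
    have b: "0 \<le> b" using alpha_b alpha_nonneg[of "n - 1"] n4 by simp
    have "l \<le> lambda_min (cyc_mat n alpha)"
      if "l \<le> 1 - 2 * a" and "a\<^sup>2 \<le> (1 - a - l) * (1 - b - l)" for l
      using n4 alpha_a alpha_b a b that
      by (rule lambda_min_cyc_mat_ge_almost_constant[where alpha = alpha])
    moreover have "pos_def_mat (cyc_mat n alpha)"
      if "a < 1/2" and "b < 1" and "a\<^sup>2 < (1 - a) * (1 - b)"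
      using n4 alpha_a alpha_b a b that
      by (rule pos_def_cyc_mat_almost_constant[where alpha = alpha])
    ultimately show ?thesis by blast
  qed
  show ?thesis
  proof (intro conjI)
    show "1 - M \<le> lambda_min (cyc_mat n alpha)"
      using n alpha_nonneg M_ge by (rule lambda_min_cyc_mat_ge[where alpha = alpha])
    show "M < 1 \<longrightarrow> pos_def_mat (cyc_mat n alpha)"
      using pos_def_cyc_mat[where alpha = alpha, OF alpha_nonneg M_ge] by blast
    show "lambda_min (cyc_mat n alpha) = 1 - M \<longleftrightarrow> (\<forall>i<n. alpha i = alpha ((i + 2) mod n))"
      using n pos M_ge M_attained by (rule lambda_min_cyc_mat_eq_iff[where alpha = alpha])
  qed (use almost_constant in blast)
qed

end
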